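(* Let $\Omega\subset\mathbb{R}^3$ be a bounded contractible Lipschitz polyhedral domain, and let $H_0^h(\mathrm{grad},\Omega)\subset H_0^1(\Omega)$ and $H_0^h(\mathrm{curl},\Omega)\subset H_0(\mathrm{curl},\Omega)$ be finite element spaces (piecewise polynomial on a mesh) with $\nabla H_0^h(\mathrm{grad},\Omega)\subset H_0^h(\mathrm{curl},\Omega)$. Let $\mathbb Q_h^{\mathrm{curl}}$ be the $L^2(\Omega)^3$-orthogonal projection onto $H_0^h(\mathrm{curl},\Omega)$. Let $\Delta t>0$, $R_e\in(0,\infty]$. Let $\bm u^n,\bm u^{n+1}\in H_0^h(\mathrm{curl},\Omega)$, $p\in H_0^h(\mathrm{grad},\Omega)$, set $\bm\omega^k:=\mathbb Q_h^{\mathrm{curl}}(\nabla\times\bm u^k)$ for $k=n,n+1$, $\bm u:=\frac12(\bm u^{n+1}+\bm u^n)$, $\bm\omega:=\frac12(\bm\omega^{n+1}+\bm\omega^n)$ and $D_t\bm u:=(\bm u^{n+1}-\bm u^n)/\Delta t$, and suppose that $$(D_t\bm u,\bm v)-(\bm u\times\bm\omega,\bm v)+R_e^{-1}(\nabla\times\bm u,\nabla\times\bm v)+(\nabla p,\bm v)=0\quad\forall\,\bm v\in H_0^h(\mathrm{curl},\Omega),$$ and $(\bm u,\nabla q)=0$ for all $q\in H_0^h(\mathrm{grad},\Omega)$. Then $$\frac{1}{\Delta t}\Big(\int_\Omega\bm u^{n+1}\cdot\bm\omega^{n+1}\,dx-\int_\Omega\bm u^{n}\cdot\bm\omega^{n}\,dx\Big)=-2R_e^{-1}\int_\Omega(\nabla\times\bm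 u)\cdot(\nabla\times\bm\omega)\,dx .$$ In particular, for $R_e=\infty$ the discrete fluid helicity $\int_\Omega\bm u^k\cdot\bm\omega^k\,dx$ is conserved from step $n$ to step $n+1$.
   Context: $(\cdot,\cdot)$ denotes the $L^2(\Omega)$ inner product. $H_0(\mathrm{curl},\Omega)=\{\bm v\in L^2(\Omega)^3:\nabla\times\bm v\in L^2(\Omega)^3,\ \bm v\times\bm n=0\text{ on }\partial\Omega\}$. Note that $\bm\omega=\mathbb Q_h^{\mathrm{curl}}(\nabla\times\bm u)$, i.e. $(\bm\omega,\bm\mu)=(\nabla\times\bm u,\bm\mu)$ for all $\bm\mu\in H_0^h(\mathrm{curl},\Omega)$. *)

theory Defs
  imports "HOL-Analysis.Analysis" "HOL-Analysis.Cross3"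
begin

definition pd :: "(real^3 \<Rightarrow> 'b::real_normed_vector) \<Rightarrow> 3 \<Rightarrow> real^3 \<Rightarrow> 'b" where
  "pd f j x = frechet_derivative f (at x) (axis j 1)"

fun iter_pd :: "(real^3 \<Rightarrow> 'b::real_normed_vector) \<Rightarrow> 3 list \<Rightarrow> real^3 \<Rightarrow> 'b" where
  "iter_pd f [] = f"
| "iter_pd f (j # js) = pd (iter_pd f js) j"

definition C_inf :: "(real^3 \<Rightarrow> 'b::real_normed_vector) \<Rightarrow> bool" where
  "C_inf f \<longleftrightarrow> (\<forall>js x. iter_pd f js differentiable (at x))"

definition test_fun :: "(real^3) set \<Rightarrow> (real^3 \<Rightarrow> 'b::real_normed_vector) \<Rightarrow> bool" where
  "test_fun \<Omega> \<phi> \<longleftrightarrow> C_inf \<phi> \<and> compact (closure {x. \<phi> x \<noteq> 0})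
      \<and> closure {x. \<phi> x \<noteq> 0} \<subseteq> \<Omega>"

definition grad :: "(real^3 \<Rightarrow> real) \<Rightarrow> real^3 \<Rightarrow> real^3" where
  "grad f x = (\<chi> j. pd f j x)"

definition curl :: "(real^3 \<Rightarrow> real^3) \<Rightarrow> real^3 \<Rightarrow> real^3" where
  "curl f x = vector [ (pd f 2 x)$3 - (pd f 3 x)$2,
                       (pd f 3 x)$1 - (pd f 1 x)$3,
                       (pd f 1 x)$2 - (pd f 2 x)$1 ]"

definition L2 :: "(real^3) set \<Rightarrow> (real^3 \<Rightarrow> 'b::real_normed_vector) \<Rightarrow> bool" where
  "L2 \<Omega> f \<longleftrightarrow> f \<in> borel_measurable (lebesgue_on \<Omega>)
      \<and> integrable (lebesgue_on \<Omega>) (\<lambda>x. (norm (f x))\<^sup>2)"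

definition ip :: "(real^3) set \<Rightarrow> (real^3 \<Rightarrow> 'b::real_inner) \<Rightarrow> (real^3 \<Rightarrow> 'b) \<Rightarrow> real" where
  "ip \<Omega> u v = integral\<^sup>L (lebesgue_on \<Omega>) (\<lambda>x. u x \<bullet> v x)"

definition has_weak_curl :: "(real^3) set \<Rightarrow> (real^3 \<Rightarrow> real^3) \<Rightarrow> (real^3 \<Rightarrow> real^3) \<Rightarrow> bool" where
  "has_weak_curl \<Omega> u w \<longleftrightarrow>
     (\<forall>\<phi>. test_fun \<Omega> \<phi> \<longrightarrow> ip \<Omega> u (curl \<phi>) = ip \<Omega> w \<phi>)"

definition has_weak_grad :: "(real^3) set \<Rightarrow> (real^3 \<Rightarrow> real) \<Rightarrow> (real^3 \<Rightarrow> real^3) \<Rightarrow> bool" where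
  "has_weak_grad \<Omega> p g \<longleftrightarrow>
     (\<forall>\<phi>. test_fun \<Omega> \<phi> \<longrightarrow> ip \<Omega> p (\<lambda>x. - (\<Sum>j\<in>UNIV. pd \<phi> j x $ j)) = ip \<Omega> g \<phi>)"

definition wcurl :: "(real^3) set \<Rightarrow> (real^3 \<Rightarrow> real^3) \<Rightarrow> real^3 \<Rightarrow> real^3" where
  "wcurl \<Omega> u = (SOME w. L2 \<Omega> w \<and> has_weak_curl \<Omega> u w)"

definition wgrad :: "(real^3) set \<Rightarrow> (real^3 \<Rightarrow> real) \<Rightarrow> real^3 \<Rightarrow> real^3" where
  "wgrad \<Omega> p = (SOME g. L2 \<Omega> g \<and> has_weak_grad \<Omega> p g)"

definition Hcurl :: "(real^3) set \<Rightarrow> (real^3 \<Rightarrow> real^3) set" where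
  "Hcurl \<Omega> = {u. L2 \<Omega> u \<and> (\<exists>w. L2 \<Omega> w \<and> has_weak_curl \<Omega> u w)}"

definition H1 :: "(real^3) set \<Rightarrow> (real^3 \<Rightarrow> real) set" where
  "H1 \<Omega> = {p. L2 \<Omega> p \<and> (\<exists>g. L2 \<Omega> g \<and> has_weak_grad \<Omega> p g)}"

text \<open>H_0(curl): closure of C_c^infinity(Omega)^3 in the H(curl) norm
  (the zero tangential trace space).\<close>
definition H0curl :: "(real^3) set \<Rightarrow> (real^3 \<Rightarrow> real^3) set" where
  "H0curl \<Omega> = {u. u \<in> Hcurl \<Omega> \<and> (\<exists>\<phi>::nat \<Rightarrow> real^3 \<Rightarrow> real^3. (\<forall>k. test_fun \<Omega> (\<phi> k))
       \<and> (\<lambda>k. ip \<Omega> (\<lambda>x. \<phi> k x - u x) (\<lambda>x. \<phi> k x - u x)) \<longlonglongrightarrow> 0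
       \<and> (\<lambda>k. ip \<Omega> (\<lambda>x. curl (\<phi> k) x - wcurl \<Omega> u x) (\<lambda>x. curl (\<phi> k) x - wcurl \<Omega> u x)) \<longlonglongrightarrow> 0)}"

definition H01 :: "(real^3) set \<Rightarrow> (real^3 \<Rightarrow> real) set" where
  "H01 \<Omega> = {p. p \<in> H1 \<Omega> \<and> (\<exists>\<phi>::nat \<Rightarrow> real^3 \<Rightarrow> real. (\<forall>k. test_fun \<Omega> (\<phi> k))
       \<and> (\<lambda>k. ip \<Omega> (\<lambda>x. \<phi> k x - p x) (\<lambda>x. \<phi> k x - p x)) \<longlonglongrightarrow> 0
       \<and> (\<lambda>k. ip \<Omega> (\<lambda>x. grad (\<phi> k) x - wgrad \<Omega> p x) (\<lambda>x. grad (\<phi> k) x - wgrad \<Omega> p x)) \<longlonglongrightarrow> 0)}"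

definition polyhedral_domain :: "(real^3) set \<Rightarrow> bool" where
  "polyhedral_domain \<Omega> \<longleftrightarrow> open \<Omega> \<and> connected \<Omega> \<and> bounded \<Omega>
     \<and> (\<exists>P. finite P \<and> (\<forall>S\<in>P. polytope S) \<and> \<Omega> = interior (\<Union>P))"

definition is_mesh :: "(real^3) set \<Rightarrow> (real^3) set set \<Rightarrow> bool" where
  "is_mesh \<Omega> \<T> \<longleftrightarrow> finite \<T> \<and> (\<forall>T\<in>\<T>. 3 simplex T) \<and> \<Union>\<T> = closure \<Omega>
     \<and> (\<forall>T\<in>\<T>. \<forall>T'\<in>\<T>. T \<noteq> T' \<longrightarrow> interior T \<inter> interior T' = {})"

definition poly3 :: "nat \<Rightarrow> (real^3 \<Rightarrow> real) \<Rightarrow> bool" where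
  "poly3 k f \<longleftrightarrow> (\<exists>c :: nat \<times> nat \<times> nat \<Rightarrow> real. \<forall>x.
     f x = (\<Sum>(a,b,d) \<in> {(a,b,d). a + b + d \<le> k}. c (a,b,d) * x$1 ^ a * x$2 ^ b * x$3 ^ d))"

definition pw_poly :: "(real^3) set set \<Rightarrow> nat \<Rightarrow> (real^3 \<Rightarrow> real) \<Rightarrow> bool" where
  "pw_poly \<T> k f \<longleftrightarrow> (\<forall>T\<in>\<T>. \<exists>P. poly3 k P \<and> (\<forall>x\<in>interior T. f x = P x))"

definition pw_poly_field :: "(real^3) set set \<Rightarrow> nat \<Rightarrow> (real^3 \<Rightarrow> real^3) \<Rightarrow> bool" where
  "pw_poly_field \<T> k u \<longleftrightarrow> (\<forall>i. pw_poly \<T> k (\<lambda>x. u x $ i))"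

definition fn_subspace :: "(real^3 \<Rightarrow> 'b::real_vector) set \<Rightarrow> bool" where
  "fn_subspace V \<longleftrightarrow> (\<lambda>x. 0) \<in> V \<and> (\<forall>u\<in>V. \<forall>v\<in>V. (\<lambda>x. u x + v x) \<in> V)
     \<and> (\<forall>c. \<forall>u\<in>V. (\<lambda>x. c *\<^sub>R u x) \<in> V)"

definition FE_grad_space :: "(real^3) set \<Rightarrow> (real^3) set set \<Rightarrow> nat \<Rightarrow> (real^3 \<Rightarrow> real) set \<Rightarrow> bool" where
  "FE_grad_space \<Omega> \<T> k V \<longleftrightarrow> fn_subspace V \<and> V \<subseteq> H01 \<Omega> \<and> (\<forall>p\<in>V. pw_poly \<T> k p)"

definition FE_curl_space :: "(real^3) set \<Rightarrow> (real^3) set set \<Rightarrow> nat \<Rightarrow> (real^3 \<Rightarrow> real^3) set \<Rightarrow> bool" where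
  "FE_curl_space \<Omega> \<T> k W \<longleftrightarrow> fn_subspace W \<and> W \<subseteq> H0curl \<Omega> \<and> (\<forall>u\<in>W. pw_poly_field \<T> k u)"

definition is_L2_proj :: "(real^3) set \<Rightarrow> (real^3 \<Rightarrow> real^3) set \<Rightarrow> (real^3 \<Rightarrow> real^3) \<Rightarrow> (real^3 \<Rightarrow> real^3) \<Rightarrow> bool" where
  "is_L2_proj \<Omega> W f g \<longleftrightarrow> g \<in> W \<and> (\<forall>\<mu>\<in>W. ip \<Omega> g \<mu> = ip \<Omega> f \<mu>)"

end

theory Submission
  imports Defs
begin

text \<open>Test the momentum equation with \<open>v = \<omega>\<close>. The convection term vanishes pointwise,
  since \<open>(u \<times> \<omega>) \<bullet> \<omega> = 0\<close>. The pressure term vanishes: \<open>grad p\<close> lies in the discrete curl space,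
  so \<open>(\<omega>\<^sup>k, grad p) = (curl u\<^sup>k, grad p) = (u\<^sup>k, curl grad p) = 0\<close>, and the weak curl of a weak
  gradient is zero because \<open>div curl = 0\<close> on test fields (symmetry of mixed partial derivatives).
  In the time term the mixed products cancel, \<open>(u\<^sup>n\<^sup>+\<^sup>1, \<omega>\<^sup>n) = (u\<^sup>n, \<omega>\<^sup>n\<^sup>+\<^sup>1)\<close>, because the curl is
  self-adjoint on \<open>H\<^sub>0(curl)\<close>. What remains is the helicity increment divided by \<open>2 \<Delta>t\<close>,
  balanced by the viscous term. Of the hypotheses only boundedness and openness of \<open>\<Omega>\<close> and the
  inclusion of discrete gradients are used.\<close>

section \<open>Partial derivatives, curl and divergence\<close>

lemma pd_bounded_linear:
  fixes f :: "real^3 \<Rightarrow> 'b::real_normed_vector" and L :: "'b \<Rightarrow> 'c::real_normed_vector"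
  assumes L: "bounded_linear L" and f: "f differentiable (at x)"
  shows "pd (\<lambda>y. L (f y)) j x = L (pd f j x)"
proof -
  have "(f has_derivative frechet_derivative f (at x)) (at x)"
    using f frechet_derivative_works by blast
  then have "((\<lambda>y. L (f y)) has_derivative (\<lambda>h. L (frechet_derivative f (at x) h))) (at x)"
    using L bounded_linear.has_derivative by blast
  then have "(\<lambda>h. L (frechet_derivative f (at x) h)) = frechet_derivative (\<lambda>y. L (f y)) (at x)"
    by (rule frechet_derivative_at)
  then show ?thesis unfolding pd_def by metis
qed

lemma pd_vec_nth:
  "f differentiable (at x) \<Longrightarrow> pd (\<lambda>y. f y $ k) j x = pd f j x $ k"
  using pd_bounded_linear[OF bounded_linear_vec_nth] by blast

lemma pd_sum:
  fixes f :: "'i \<Rightarrow> real^3 \<Rightarrow> 'b::real_normed_vector"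
  assumes "finite I" and f: "\<And>i. i \<in> I \<Longrightarrow> f i differentiable (at x)"
  shows "pd (\<lambda>y. \<Sum>i\<in>I. f i y) j x = (\<Sum>i\<in>I. pd (f i) j x)"
proof -
  have "\<And>i. i \<in> I \<Longrightarrow> (f i has_derivative frechet_derivative (f i) (at x)) (at x)"
    using f frechet_derivative_works by blast
  then have "((\<lambda>y. \<Sum>i\<in>I. f i y) has_derivative (\<lambda>h. \<Sum>i\<in>I. frechet_derivative (f i) (at x) h)) (at x)"
    by (rule has_derivative_sum)
  then have "(\<lambda>h. \<Sum>i\<in>I. frechet_derivative (f i) (at x) h) = frechet_derivative (\<lambda>y. \<Sum>i\<in>I. f i y) (at x)"
    by (rule frechet_derivative_at)
  then show ?thesis unfolding pd_def by metis
qed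

lemma differentiable_bounded_linear_comp:
  "bounded_linear L \<Longrightarrow> g differentiable (at x) \<Longrightarrow> (\<lambda>y. L (g y)) differentiable (at x)"
  using bounded_linear_imp_differentiable differentiable_compose[of L g x]
  by (metis (no_types, lifting) comp_def)

lemma bounded_linear_cross3: "bounded_linear (cross3 a)"
  using bilinear_cross by (simp add: bilinear_def linear_conv_bounded_linear)

lemma C_inf_differentiable: "C_inf f \<Longrightarrow> f differentiable (at x)"
  unfolding C_inf_def by (metis iter_pd.simps(1))

lemma C_inf_pd_differentiable: "C_inf f \<Longrightarrow> pd f i differentiable (at x)"
  unfolding C_inf_def by (metis iter_pd.simps)

lemma C_inf_pd_pd_differentiable: "C_inf f \<Longrightarrow> pd (pd f i) j differentiable (at x)"
  unfolding C_inf_def by (metis iter_pd.simps)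

lemma curl_eq_sum_cross3: "curl f x = (\<Sum>j\<in>UNIV. cross3 (axis j 1) (pd f j x))"
  unfolding curl_def cross3_def sum_3
  by (simp add: vec_eq_iff vector_def axis_def forall_3)

lemma iter_pd_curl:
  assumes "C_inf f"
  shows "iter_pd (curl f) js x = (\<Sum>j\<in>UNIV. cross3 (axis j 1) (iter_pd f (js @ [j]) x))"
proof (induction js arbitrary: x)
  case Nil
  then show ?case by (simp add: curl_eq_sum_cross3)
next
  case (Cons i js)
  have diff: "(\<lambda>y. cross3 a (iter_pd f ks y)) differentiable (at y)" for a ks y
    using assms unfolding C_inf_def
    by (blast intro: differentiable_bounded_linear_comp[OF bounded_linear_cross3])
  have "iter_pd (curl f) js = (\<lambda>y. \<Sum>j\<in>UNIV. cross3 (axis j 1) (iter_pd f (js @ [j]) y))"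
    using Cons.IH by (rule ext)
  then have "iter_pd (curl f) (i # js) x
      = pd (\<lambda>y. \<Sum>j\<in>UNIV. cross3 (axis j 1) (iter_pd f (js @ [j]) y)) i x"
    by simp
  also have "\<dots> = (\<Sum>j\<in>UNIV. pd (\<lambda>y. cross3 (axis j 1) (iter_pd f (js @ [j]) y)) i x)"
    using diff by (intro pd_sum) auto
  also have "\<dots> = (\<Sum>j\<in>UNIV. cross3 (axis j 1) (iter_pd f ((i # js) @ [j]) x))"
    using assms unfolding C_inf_def by (simp add: pd_bounded_linear[OF bounded_linear_cross3])
  finally show ?case .
qed

lemma C_inf_curl:
  assumes "C_inf f"
  shows "C_inf (curl f)"
  unfolding C_inf_def
proof (intro allI)
  fix js x
  have "iter_pd (curl f) js = (\<lambda>y. \<Sum>j\<in>UNIV. cross3 (axis j 1) (iter_pd f (js @ [j]) y))"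
    using iter_pd_curl[OF assms] by (rule ext)
  then show "iter_pd (curl f) js differentiable at x"
    using assms unfolding C_inf_def
    by (auto intro!: differentiable_sum differentiable_bounded_linear_comp[OF bounded_linear_cross3])
qed

lemma mvt_along_line:
  fixes g :: "'a::real_normed_vector \<Rightarrow> real"
  assumes g: "\<And>y. g differentiable (at y)" and s: "0 < s"
  obtains t where "0 < t" "t < s" "g (p + s *\<^sub>R d) - g p = s * frechet_derivative g (at (p + t *\<^sub>R d)) d"
proof -
  have "\<exists>t\<in>{0<..<s}. g (p + s *\<^sub>R d) - g (p + 0 *\<^sub>R d)
          = (\<lambda>\<tau> r. r * frechet_derivative g (at (p + \<tau> *\<^sub>R d)) d) t (s - 0)"
  proof (rule mvt_simple[OF s])
    fix \<tau> :: real
    let ?D = "frechet_derivative g (at (p + \<tau> *\<^sub>R d))"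
    have line: "((\<lambda>\<tau>. p + \<tau> *\<^sub>R d) has_derivative (\<lambda>r. r *\<^sub>R d)) (at \<tau>)"
      by (auto intro!: derivative_eq_intros)
    have dg: "(g has_derivative ?D) (at (p + \<tau> *\<^sub>R d))"
      using g frechet_derivative_works by blast
    have "((\<lambda>\<tau>. g (p + \<tau> *\<^sub>R d)) has_derivative (\<lambda>r. ?D (r *\<^sub>R d))) (at \<tau>)"
      using diff_chain_at[OF line dg] by (simp add: o_def)
    moreover have "(\<lambda>r. ?D (r *\<^sub>R d)) = (\<lambda>r. r * ?D d)"
      using linear_scale[OF has_derivative_linear[OF dg]] by auto
    ultimately show "((\<lambda>\<tau>. g (p + \<tau> *\<^sub>R d)) has_derivative (\<lambda>r. r * ?D d)) (at \<tau> within {0..s})"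
      by (simp add: has_derivative_at_withinI)
  qed
  then show thesis using that by auto
qed

text \<open>The mean value theorem applied twice, first along \<open>e\<^sub>i\<close>, then along \<open>e\<^sub>j\<close>.\<close>
lemma second_difference_eq_pd_pd:
  fixes h :: "real^3 \<Rightarrow> real"
  assumes dh: "\<And>y. h differentiable (at y)" and dhi: "\<And>y. pd h i differentiable (at y)"
    and s: "0 < s"
  obtains y where "dist y x < 2 * s"
    "h (x + s *\<^sub>R axis i 1 + s *\<^sub>R axis j 1) - h (x + s *\<^sub>R axis i 1) - h (x + s *\<^sub>R axis j 1) + h x
       = s * s * pd (pd h i) j y"
proof -
  define a :: "real^3" where "a = axis i 1"
  define b :: "real^3" where "b = axis j 1"
  define g where "g z = h (z + s *\<^sub>R b) - h z" for z
  have dg: "(g has_derivative (\<lambda>v. frechet_derivative h (at (z + s *\<^sub>R b)) v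
                                  - frechet_derivative h (at z) v)) (at z)" for z
  proof -
    have shift: "((\<lambda>z. z + s *\<^sub>R b) has_derivative (\<lambda>v. v)) (at z)"
      by (auto intro!: derivative_eq_intros)
    have dh': "(h has_derivative frechet_derivative h (at y)) (at y)" for y
      using dh frechet_derivative_works by blast
    have "((\<lambda>z. h (z + s *\<^sub>R b)) has_derivative frechet_derivative h (at (z + s *\<^sub>R b))) (at z)"
      using diff_chain_at[OF shift dh'] by (simp add: o_def)
    then show ?thesis
      unfolding g_def using dh'[of z] by (rule has_derivative_diff)
  qed
  have fd_g: "frechet_derivative g (at z)
      = (\<lambda>v. frechet_derivative h (at (z + s *\<^sub>R b)) v - frechet_derivative h (at z) v)" for z
    by (rule frechet_derivative_at[OF dg, symmetric])
  have "g differentiable (at y)" for y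
    using dg differentiable_def by blast
  then obtain t where t: "0 < t" "t < s"
    and g_mvt: "g (x + s *\<^sub>R a) - g x = s * frechet_derivative g (at (x + t *\<^sub>R a)) a"
    using s by (rule mvt_along_line)
  obtain \<eta> where \<eta>: "0 < \<eta>" "\<eta> < s"
    and pd_mvt: "pd h i (x + t *\<^sub>R a + s *\<^sub>R b) - pd h i (x + t *\<^sub>R a)
      = s * frechet_derivative (pd h i) (at (x + t *\<^sub>R a + \<eta> *\<^sub>R b)) b"
    using dhi s by (rule mvt_along_line)
  define y where "y = x + t *\<^sub>R a + \<eta> *\<^sub>R b"
  have "dist y x = norm (t *\<^sub>R a + \<eta> *\<^sub>R b)"
    unfolding y_def dist_norm by (simp add: algebra_simps)
  also have "\<dots> \<le> norm (t *\<^sub>R a) + norm (\<eta> *\<^sub>R b)"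
    by (rule norm_triangle_ineq)
  also have "\<dots> < 2 * s"
    using t \<eta> by (simp add: a_def b_def)
  finally have "dist y x < 2 * s" .
  moreover have "h (x + s *\<^sub>R a + s *\<^sub>R b) - h (x + s *\<^sub>R a) - h (x + s *\<^sub>R b) + h x
      = g (x + s *\<^sub>R a) - g x"
    unfolding g_def by (simp add: algebra_simps)
  moreover have "g (x + s *\<^sub>R a) - g x = s * s * pd (pd h i) j y"
    using g_mvt pd_mvt unfolding fd_g pd_def a_def b_def y_def by simp
  ultimately show thesis
    using that unfolding a_def b_def by simp
qed

lemma pd_pd_commute:
  fixes h :: "real^3 \<Rightarrow> real"
  assumes dh: "\<And>y. h differentiable (at y)"
    and dhi: "\<And>y. pd h i differentiable (at y)" and dhj: "\<And>y. pd h j differentiable (at y)"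
    and ci: "isCont (pd (pd h i) j) x" and cj: "isCont (pd (pd h j) i) x"
  shows "pd (pd h i) j x = pd (pd h j) i x"
proof (rule ccontr)
  let ?P = "pd (pd h i) j" and ?Q = "pd (pd h j) i"
  assume "?P x \<noteq> ?Q x"
  define e where "e = \<bar>?P x - ?Q x\<bar> / 2"
  have e: "e > 0" using \<open>?P x \<noteq> ?Q x\<close> unfolding e_def by simp
  obtain d1 where d1: "d1 > 0" "\<And>y. dist y x < d1 \<Longrightarrow> dist (?P y) (?P x) < e"
    using ci e unfolding continuous_at_eps_delta by blast
  obtain d2 where d2: "d2 > 0" "\<And>y. dist y x < d2 \<Longrightarrow> dist (?Q y) (?Q x) < e"
    using cj e unfolding continuous_at_eps_delta by blast
  define s where "s = min d1 d2 / 2"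
  have s: "s > 0" using d1 d2 unfolding s_def by simp
  obtain y where y: "dist y x < 2 * s" and ey: "h (x + s *\<^sub>R axis i 1 + s *\<^sub>R axis j 1)
      - h (x + s *\<^sub>R axis i 1) - h (x + s *\<^sub>R axis j 1) + h x = s * s * ?P y"
    using second_difference_eq_pd_pd[OF dh dhi s] by blast
  obtain z where z: "dist z x < 2 * s" and ez: "h (x + s *\<^sub>R axis j 1 + s *\<^sub>R axis i 1)
      - h (x + s *\<^sub>R axis j 1) - h (x + s *\<^sub>R axis i 1) + h x = s * s * ?Q z"
    using second_difference_eq_pd_pd[OF dh dhj s] by blast
  have "?P y = ?Q z" using ey ez s by (simp add: algebra_simps)
  moreover have "dist (?P y) (?P x) < e" "dist (?Q z) (?Q x) < e"
    using d1 d2 y z unfolding s_def by auto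
  ultimately show False unfolding e_def dist_real_def by (smt (verit) field_sum_of_halves)
qed

lemma C_inf_pd_pd_commute:
  fixes f :: "real^3 \<Rightarrow> real^3"
  assumes f: "C_inf f"
  shows "pd (pd f i) j x = pd (pd f j) i x"
proof (subst vec_eq_iff, intro allI)
  fix k
  define h where "h y = f y $ k" for y
  have pd_h: "pd h l = (\<lambda>y. pd f l y $ k)" for l
    unfolding h_def by (rule ext, rule pd_vec_nth, rule C_inf_differentiable[OF f])
  have pd_pd_h: "pd (pd h l) m = (\<lambda>y. pd (pd f l) m y $ k)" for l m
    unfolding pd_h by (rule ext, rule pd_vec_nth, rule C_inf_pd_differentiable[OF f])
  have dh: "h differentiable (at y)" for y
    unfolding h_def
    by (rule differentiable_bounded_linear_comp[OF bounded_linear_vec_nth C_inf_differentiable[OF f]])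
  have dh': "pd h l differentiable (at y)" for l y
    unfolding pd_h
    by (rule differentiable_bounded_linear_comp[OF bounded_linear_vec_nth C_inf_pd_differentiable[OF f]])
  have cont: "isCont (pd (pd h l) m) x" for l m
    unfolding pd_pd_h
    by (rule differentiable_imp_continuous_within,
        rule differentiable_bounded_linear_comp[OF bounded_linear_vec_nth C_inf_pd_pd_differentiable[OF f]])
  have "pd (pd h i) j x = pd (pd h j) i x"
    by (rule pd_pd_commute[OF dh dh' dh' cont cont])
  then show "pd (pd f i) j x $ k = pd (pd f j) i x $ k" unfolding pd_pd_h .
qed

lemma div_curl_eq_0:
  fixes f :: "real^3 \<Rightarrow> real^3"
  assumes f: "C_inf f"
  shows "(\<Sum>j\<in>UNIV. pd (curl f) j x $ j) = 0"
proof -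
  define S where "S i j = pd (pd f i) j x" for i j
  have "pd (curl f) j x = (\<Sum>i\<in>UNIV. cross3 (axis i 1) (S i j))" for j
    using iter_pd_curl[OF f, of "[j]" x] by (simp add: S_def)
  then have "(\<Sum>j\<in>UNIV. pd (curl f) j x $ j) = (\<Sum>j\<in>UNIV. (\<Sum>i\<in>UNIV. cross3 (axis i 1) (S i j)) $ j)"
    by simp
  also have "\<dots> = 0"
  proof -
    have "S 2 1 = S 1 2" "S 3 1 = S 1 3" "S 3 2 = S 2 3"
      unfolding S_def using C_inf_pd_pd_commute[OF f] by auto
    then show ?thesis unfolding sum_3 cross3_def by (simp add: axis_def)
  qed
  finally show ?thesis .
qed

lemma pd_eq_0_outside_support:
  assumes f: "f differentiable (at x)" and x: "x \<notin> closure {y. f y \<noteq> 0}"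
  shows "pd f j x = 0"
proof -
  have "frechet_derivative f (at x) = frechet_derivative (\<lambda>y. 0) (at x)"
  proof (rule frechet_derivative_transform_within_open[OF f])
    show "open (- closure {y. f y \<noteq> 0})" by auto
    show "x \<in> - closure {y. f y \<noteq> 0}" using x by simp
    show "f z = 0" if "z \<in> - closure {y. f y \<noteq> 0}" for z
      using that closure_subset[of "{y. f y \<noteq> 0}"] by auto
  qed
  then show ?thesis unfolding pd_def by simp
qed

lemma test_fun_curl:
  assumes t: "test_fun \<Omega> \<psi>"
  shows "test_fun \<Omega> (curl \<psi>)"
proof -
  have ci: "C_inf \<psi>" using t unfolding test_fun_def by blast
  have "curl \<psi> x = 0" if "x \<notin> closure {x. \<psi> x \<noteq> 0}" for x
    using pd_eq_0_outside_support[OF C_inf_differentiable[OF ci] that]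
    by (simp add: curl_eq_sum_cross3)
  then have "{x. curl \<psi> x \<noteq> 0} \<subseteq> closure {x. \<psi> x \<noteq> 0}" by blast
  then have supp: "closure {x. curl \<psi> x \<noteq> 0} \<subseteq> closure {x. \<psi> x \<noteq> 0}"
    by (simp add: closure_minimal)
  then have "compact (closure {x. curl \<psi> x \<noteq> 0})"
    using t unfolding test_fun_def
    by (metis closed_closure compact_Int_closed inf.absorb_iff2)
  then show ?thesis using t supp C_inf_curl[OF ci] unfolding test_fun_def by blast
qed

section \<open>The space \<open>L\<^sup>2(\<Omega>)\<close>\<close>

lemma L2_measurable: "L2 \<Omega> f \<Longrightarrow> f \<in> borel_measurable (lebesgue_on \<Omega>)"
  unfolding L2_def by blast

lemma L2_integrable_norm_square: "L2 \<Omega> f \<Longrightarrow> integrable (lebesgue_on \<Omega>) (\<lambda>x. (norm (f x))\<^sup>2)"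
  unfolding L2_def by blast

lemma L2_integrable_inner:
  fixes f g :: "real^3 \<Rightarrow> 'b::euclidean_space"
  assumes "L2 \<Omega> f" "L2 \<Omega> g"
  shows "integrable (lebesgue_on \<Omega>) (\<lambda>x. f x \<bullet> g x)"
proof (rule Bochner_Integration.integrable_bound)
  show "integrable (lebesgue_on \<Omega>) (\<lambda>x. (norm (f x))\<^sup>2 + (norm (g x))\<^sup>2)"
    using assms by (intro Bochner_Integration.integrable_add L2_integrable_norm_square)
  show "(\<lambda>x. f x \<bullet> g x) \<in> borel_measurable (lebesgue_on \<Omega>)"
    using assms by (intro borel_measurable_inner L2_measurable)
  have "\<bar>a \<bullet> b\<bar> \<le> (norm a)\<^sup>2 + (norm b)\<^sup>2" for a b :: 'b
    using Cauchy_Schwarz_ineq2[of a b] sum_squares_bound[of "norm a" "norm b"]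
      zero_le_mult_iff[of "norm a" "norm b"] by linarith
  then show "AE x in lebesgue_on \<Omega>. norm (f x \<bullet> g x) \<le> norm ((norm (f x))\<^sup>2 + (norm (g x))\<^sup>2)"
    by (intro AE_I2) simp
qed

lemma L2_add:
  fixes f g :: "real^3 \<Rightarrow> 'b::euclidean_space"
  assumes f: "L2 \<Omega> f" and g: "L2 \<Omega> g"
  shows "L2 \<Omega> (\<lambda>x. f x + g x)"
  unfolding L2_def
proof
  show "(\<lambda>x. f x + g x) \<in> borel_measurable (lebesgue_on \<Omega>)"
    using f g by (intro borel_measurable_add L2_measurable)
  have "integrable (lebesgue_on \<Omega>) (\<lambda>x. (norm (f x))\<^sup>2 + 2 * (f x \<bullet> g x) + (norm (g x))\<^sup>2)"
    using f g by (intro Bochner_Integration.integrable_add integrable_mult_right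
        L2_integrable_norm_square L2_integrable_inner)
  moreover have "(norm (a + b))\<^sup>2 = (norm a)\<^sup>2 + 2 * (a \<bullet> b) + (norm b)\<^sup>2" for a b :: 'b
    using dot_norm[of a b] by simp
  ultimately show "integrable (lebesgue_on \<Omega>) (\<lambda>x. (norm (f x + g x))\<^sup>2)"
    by simp
qed

lemma L2_scaleR:
  fixes f :: "real^3 \<Rightarrow> 'b::euclidean_space"
  assumes f: "L2 \<Omega> f"
  shows "L2 \<Omega> (\<lambda>x. c *\<^sub>R f x)"
  unfolding L2_def
proof
  show "(\<lambda>x. c *\<^sub>R f x) \<in> borel_measurable (lebesgue_on \<Omega>)"
    using f by (intro borel_measurable_scaleR borel_measurable_const L2_measurable)
  have "integrable (lebesgue_on \<Omega>) (\<lambda>x. c\<^sup>2 * (norm (f x))\<^sup>2)"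
    using f by (intro integrable_mult_right L2_integrable_norm_square)
  then show "integrable (lebesgue_on \<Omega>) (\<lambda>x. (norm (c *\<^sub>R f x))\<^sup>2)"
    by (simp add: power_mult_distrib)
qed

lemma L2_diff:
  fixes f g :: "real^3 \<Rightarrow> 'b::euclidean_space"
  assumes "L2 \<Omega> f" "L2 \<Omega> g"
  shows "L2 \<Omega> (\<lambda>x. f x - g x)"
  using L2_add[OF assms(1) L2_scaleR[OF assms(2), of "-1"]] by simp

lemma ip_commute: "ip \<Omega> f g = ip \<Omega> g f"
  unfolding ip_def by (simp add: inner_commute)

lemma ip_scaleR_left: "ip \<Omega> (\<lambda>x. c *\<^sub>R f x) g = c * ip \<Omega> f g"
  unfolding ip_def by simp

lemma ip_scaleR_right: "ip \<Omega> f (\<lambda>x. c *\<^sub>R g x) = c * ip \<Omega> f g"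
  unfolding ip_def by simp

lemma ip_add_left:
  fixes f g h :: "real^3 \<Rightarrow> 'b::euclidean_space"
  assumes "L2 \<Omega> f" "L2 \<Omega> g" "L2 \<Omega> h"
  shows "ip \<Omega> (\<lambda>x. f x + g x) h = ip \<Omega> f h + ip \<Omega> g h"
  unfolding ip_def inner_add_left
  by (rule Bochner_Integration.integral_add; rule L2_integrable_inner; fact)

lemma ip_diff_left:
  fixes f g h :: "real^3 \<Rightarrow> 'b::euclidean_space"
  assumes "L2 \<Omega> f" "L2 \<Omega> g" "L2 \<Omega> h"
  shows "ip \<Omega> (\<lambda>x. f x - g x) h = ip \<Omega> f h - ip \<Omega> g h"
  unfolding ip_def inner_diff_left
  by (rule Bochner_Integration.integral_diff; rule L2_integrable_inner; fact)

lemma ip_add_right: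
  fixes f g h :: "real^3 \<Rightarrow> 'b::euclidean_space"
  assumes "L2 \<Omega> f" "L2 \<Omega> g" "L2 \<Omega> h"
  shows "ip \<Omega> h (\<lambda>x. f x + g x) = ip \<Omega> h f + ip \<Omega> h g"
  using ip_add_left[OF assms] by (simp add: ip_commute)

lemma ip_diff_right:
  fixes f g h :: "real^3 \<Rightarrow> 'b::euclidean_space"
  assumes "L2 \<Omega> f" "L2 \<Omega> g" "L2 \<Omega> h"
  shows "ip \<Omega> h (\<lambda>x. f x - g x) = ip \<Omega> h f - ip \<Omega> h g"
  using ip_diff_left[OF assms] by (simp add: ip_commute)

lemma ip_self_nonneg: "ip \<Omega> f f \<ge> 0"
  unfolding ip_def by (rule integral_nonneg_AE) auto

lemma square_le_mult_if_quadratic_nonneg: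
  fixes A B C :: real
  assumes q: "\<And>t. 0 \<le> A + 2 * t * B + t\<^sup>2 * C" and C: "C \<ge> 0"
  shows "B\<^sup>2 \<le> A * C"
proof (cases "C = 0")
  case True
  show ?thesis
  proof (rule ccontr)
    assume "\<not> ?thesis"
    then have "B \<noteq> 0" using True by simp
    have "0 \<le> A + 2 * (- (A + 1) / (2 * B)) * B" using q[of "- (A + 1) / (2 * B)"] True by simp
    also have "\<dots> = -1" using \<open>B \<noteq> 0\<close> by (simp add: field_simps)
    finally show False by simp
  qed
next
  case False
  then have "C > 0" using C by simp
  have "0 \<le> A + 2 * (- B / C) * B + (- B / C)\<^sup>2 * C" by (rule q)
  also have "\<dots> = A - B\<^sup>2 / C" using \<open>C > 0\<close> by (simp add: field_simps power2_eq_square)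
  finally show ?thesis using \<open>C > 0\<close> by (simp add: field_simps)
qed

lemma ip_Cauchy_Schwarz:
  fixes f g :: "real^3 \<Rightarrow> 'b::euclidean_space"
  assumes f: "L2 \<Omega> f" and g: "L2 \<Omega> g"
  shows "(ip \<Omega> f g)\<^sup>2 \<le> ip \<Omega> f f * ip \<Omega> g g"
proof (rule square_le_mult_if_quadratic_nonneg)
  fix t :: real
  have tg: "L2 \<Omega> (\<lambda>x. t *\<^sub>R g x)" by (rule L2_scaleR[OF g])
  have "0 \<le> ip \<Omega> (\<lambda>x. f x + t *\<^sub>R g x) (\<lambda>x. f x + t *\<^sub>R g x)" by (rule ip_self_nonneg)
  also have "\<dots> = ip \<Omega> f f + 2 * t * ip \<Omega> f g + t\<^sup>2 * ip \<Omega> g g"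
    using ip_add_left[OF f tg L2_add[OF f tg]] ip_add_right[OF f tg f] ip_add_right[OF f tg tg]
    by (simp add: ip_scaleR_left ip_scaleR_right ip_commute[of \<Omega> g f] power2_eq_square algebra_simps)
  finally show "0 \<le> ip \<Omega> f f + 2 * t * ip \<Omega> f g + t\<^sup>2 * ip \<Omega> g g" .
qed (rule ip_self_nonneg)

lemma tendsto_ip_right:
  fixes f w :: "real^3 \<Rightarrow> 'b::euclidean_space" and \<psi> :: "nat \<Rightarrow> real^3 \<Rightarrow> 'b"
  assumes f: "L2 \<Omega> f" and w: "L2 \<Omega> w" and \<psi>: "\<And>m. L2 \<Omega> (\<psi> m)"
    and conv: "(\<lambda>m. ip \<Omega> (\<lambda>x. \<psi> m x - w x) (\<lambda>x. \<psi> m x - w x)) \<longlonglongrightarrow> 0"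
  shows "(\<lambda>m. ip \<Omega> f (\<psi> m)) \<longlonglongrightarrow> ip \<Omega> f w"
proof -
  let ?d = "\<lambda>m x. \<psi> m x - w x"
  have bound: "norm (ip \<Omega> f (?d m)) \<le> sqrt (ip \<Omega> f f) * sqrt (ip \<Omega> (?d m) (?d m))" for m
    using real_sqrt_le_mono[OF ip_Cauchy_Schwarz[OF f L2_diff[OF \<psi> w]]]
    by (simp add: real_sqrt_mult)
  have "(\<lambda>m. sqrt (ip \<Omega> f f) * sqrt (ip \<Omega> (?d m) (?d m))) \<longlonglongrightarrow> sqrt (ip \<Omega> f f) * sqrt 0"
    by (intro tendsto_intros conv)
  then have "(\<lambda>m. sqrt (ip \<Omega> f f) * sqrt (ip \<Omega> (?d m) (?d m))) \<longlonglongrightarrow> 0"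
    by simp
  then have "(\<lambda>m. ip \<Omega> f (?d m)) \<longlonglongrightarrow> 0"
    by (rule Lim_null_comparison[rotated]) (use bound in auto)
  then show ?thesis
    using ip_diff_right[OF \<psi> w f] by (simp add: LIM_zero_iff)
qed

lemma L2_if_continuous:
  fixes f :: "real^3 \<Rightarrow> 'b::euclidean_space"
  assumes b: "bounded \<Omega>" and o: "open \<Omega>" and c: "continuous_on UNIV f"
  shows "L2 \<Omega> f"
  unfolding L2_def
proof
  have lm: "\<Omega> \<in> lmeasurable" using lmeasurable_open[OF b o] .
  interpret finite_measure "lebesgue_on \<Omega>" by (rule finite_measure_lebesgue_on[OF lm])
  show meas: "f \<in> borel_measurable (lebesgue_on \<Omega>)"
    using continuous_imp_measurable_on_sets_lebesgue continuous_on_subset[OF c] fmeasurableD[OF lm]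
    by blast
  have "compact (f ` closure \<Omega>)"
    using compact_continuous_image[OF continuous_on_subset[OF c] compact_closure[THEN iffD2, OF b]]
    by blast
  then obtain B where B: "\<And>x. x \<in> closure \<Omega> \<Longrightarrow> norm (f x) \<le> B"
    using compact_imp_bounded bounded_iff by (metis image_eqI)
  show "integrable (lebesgue_on \<Omega>) (\<lambda>x. (norm (f x))\<^sup>2)"
  proof (rule integrable_const_bound[where B = "B\<^sup>2"])
    show "AE x in lebesgue_on \<Omega>. norm ((norm (f x))\<^sup>2) \<le> B\<^sup>2"
    proof (rule AE_I2)
      fix x assume "x \<in> space (lebesgue_on \<Omega>)"
      then have "norm (f x) \<le> B" using B closure_subset by auto
      then show "norm ((norm (f x))\<^sup>2) \<le> B\<^sup>2" by (simp add: power_mono)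
    qed
    show "(\<lambda>x. (norm (f x))\<^sup>2) \<in> borel_measurable (lebesgue_on \<Omega>)"
      using meas by measurable
  qed
qed

lemma C_inf_continuous_on: "C_inf f \<Longrightarrow> continuous_on UNIV f"
  by (rule differentiable_imp_continuous_on)
    (auto simp: differentiable_on_def intro: differentiable_at_withinI C_inf_differentiable)

lemma L2_test_fun:
  fixes \<psi> :: "real^3 \<Rightarrow> real^3"
  assumes "bounded \<Omega>" "open \<Omega>" "test_fun \<Omega> \<psi>"
  shows "L2 \<Omega> \<psi>"
  using assms L2_if_continuous C_inf_continuous_on unfolding test_fun_def by blast

section \<open>Weak curl and weak gradient\<close>

lemma Hcurl_L2: "u \<in> Hcurl \<Omega> \<Longrightarrow> L2 \<Omega> u"
  unfolding Hcurl_def by blast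

lemma H0curl_Hcurl: "u \<in> H0curl \<Omega> \<Longrightarrow> u \<in> Hcurl \<Omega>"
  unfolding H0curl_def by blast

lemma H0curl_L2: "u \<in> H0curl \<Omega> \<Longrightarrow> L2 \<Omega> u"
  by (rule Hcurl_L2[OF H0curl_Hcurl])

lemma wcurl_Hcurl:
  assumes "u \<in> Hcurl \<Omega>"
  shows "L2 \<Omega> (wcurl \<Omega> u)" and "has_weak_curl \<Omega> u (wcurl \<Omega> u)"
proof -
  have "\<exists>w. L2 \<Omega> w \<and> has_weak_curl \<Omega> u w" using assms unfolding Hcurl_def by blast
  then have "L2 \<Omega> (wcurl \<Omega> u) \<and> has_weak_curl \<Omega> u (wcurl \<Omega> u)"
    unfolding wcurl_def by (rule someI_ex)
  then show "L2 \<Omega> (wcurl \<Omega> u)" and "has_weak_curl \<Omega> u (wcurl \<Omega> u)" by auto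
qed

lemma wgrad_H1:
  assumes "p \<in> H1 \<Omega>"
  shows "L2 \<Omega> (wgrad \<Omega> p)" and "has_weak_grad \<Omega> p (wgrad \<Omega> p)"
proof -
  have "\<exists>g. L2 \<Omega> g \<and> has_weak_grad \<Omega> p g" using assms unfolding H1_def by blast
  then have "L2 \<Omega> (wgrad \<Omega> p) \<and> has_weak_grad \<Omega> p (wgrad \<Omega> p)"
    unfolding wgrad_def by (rule someI_ex)
  then show "L2 \<Omega> (wgrad \<Omega> p)" and "has_weak_grad \<Omega> p (wgrad \<Omega> p)" by auto
qed

lemma H0curl_approx:
  assumes "u \<in> H0curl \<Omega>"
  obtains \<psi> :: "nat \<Rightarrow> real^3 \<Rightarrow> real^3" where "\<And>k. test_fun \<Omega> (\<psi> k)"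
    "(\<lambda>k. ip \<Omega> (\<lambda>x. \<psi> k x - u x) (\<lambda>x. \<psi> k x - u x)) \<longlonglongrightarrow> 0"
    "(\<lambda>k. ip \<Omega> (\<lambda>x. curl (\<psi> k) x - wcurl \<Omega> u x) (\<lambda>x. curl (\<psi> k) x - wcurl \<Omega> u x)) \<longlonglongrightarrow> 0"
  using assms unfolding H0curl_def by blast

lemma ip_H0curl_eq_0:
  assumes b: "bounded \<Omega>" and o: "open \<Omega>" and f: "L2 \<Omega> f"
    and orth: "\<And>\<psi>. test_fun \<Omega> \<psi> \<Longrightarrow> ip \<Omega> f \<psi> = 0" and u: "u \<in> H0curl \<Omega>"
  shows "ip \<Omega> f u = 0"
proof -
  obtain \<psi> where t: "\<And>k. test_fun \<Omega> (\<psi> k)"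
    and conv: "(\<lambda>k. ip \<Omega> (\<lambda>x. \<psi> k x - u x) (\<lambda>x. \<psi> k x - u x)) \<longlonglongrightarrow> 0"
    using H0curl_approx[OF u] by blast
  have "(\<lambda>k. ip \<Omega> f (\<psi> k)) \<longlonglongrightarrow> ip \<Omega> f u"
    by (rule tendsto_ip_right[OF f H0curl_L2[OF u] L2_test_fun[OF b o t] conv])
  then show ?thesis using orth[OF t] by (simp add: LIMSEQ_const_iff)
qed

lemma ip_wcurl_sym:
  assumes b: "bounded \<Omega>" and o: "open \<Omega>" and u: "u \<in> Hcurl \<Omega>" and v: "v \<in> H0curl \<Omega>"
  shows "ip \<Omega> (wcurl \<Omega> u) v = ip \<Omega> u (wcurl \<Omega> v)"
proof -
  obtain \<psi> where t: "\<And>k. test_fun \<Omega> (\<psi> k)"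
    and conv: "(\<lambda>k. ip \<Omega> (\<lambda>x. \<psi> k x - v x) (\<lambda>x. \<psi> k x - v x)) \<longlonglongrightarrow> 0"
    and conv_curl: "(\<lambda>k. ip \<Omega> (\<lambda>x. curl (\<psi> k) x - wcurl \<Omega> v x)
                               (\<lambda>x. curl (\<psi> k) x - wcurl \<Omega> v x)) \<longlonglongrightarrow> 0"
    using H0curl_approx[OF v] by blast
  have curl_L2: "L2 \<Omega> (curl (\<psi> k))" for k
    by (rule L2_test_fun[OF b o test_fun_curl[OF t]])
  have "(\<lambda>k. ip \<Omega> (wcurl \<Omega> u) (\<psi> k)) \<longlonglongrightarrow> ip \<Omega> (wcurl \<Omega> u) v"
    by (rule tendsto_ip_right[OF wcurl_Hcurl(1)[OF u] H0curl_L2[OF v] L2_test_fun[OF b o t] conv])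
  moreover have "(\<lambda>k. ip \<Omega> u (curl (\<psi> k))) \<longlonglongrightarrow> ip \<Omega> u (wcurl \<Omega> v)"
    by (rule tendsto_ip_right[OF Hcurl_L2[OF u] wcurl_Hcurl(1)[OF H0curl_Hcurl[OF v]] curl_L2 conv_curl])
  moreover have "ip \<Omega> u (curl (\<psi> k)) = ip \<Omega> (wcurl \<Omega> u) (\<psi> k)" for k
    using wcurl_Hcurl(2)[OF u] t unfolding has_weak_curl_def by blast
  ultimately show ?thesis using LIMSEQ_unique by simp
qed

lemma ip_wgrad_H0curl:
  assumes b: "bounded \<Omega>" and o: "open \<Omega>" and p: "p \<in> H1 \<Omega>"
    and g: "L2 \<Omega> g" "has_weak_grad \<Omega> p g" and w: "w \<in> H0curl \<Omega>"
  shows "ip \<Omega> (wgrad \<Omega> p) w = ip \<Omega> g w"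
proof -
  note wp = wgrad_H1[OF p]
  have "ip \<Omega> (\<lambda>x. wgrad \<Omega> p x - g x) w = 0"
  proof (rule ip_H0curl_eq_0[OF b o L2_diff[OF wp(1) g(1)] _ w])
    fix \<psi> :: "real^3 \<Rightarrow> real^3" assume t: "test_fun \<Omega> \<psi>"
    then show "ip \<Omega> (\<lambda>x. wgrad \<Omega> p x - g x) \<psi> = 0"
      using wp(2) g(2) ip_diff_left[OF wp(1) g(1) L2_test_fun[OF b o t]]
      unfolding has_weak_grad_def by simp
  qed
  then show ?thesis using ip_diff_left[OF wp(1) g(1) H0curl_L2[OF w]] by simp
qed

lemma ip_wcurl_weak_grad_H0curl:
  assumes b: "bounded \<Omega>" and o: "open \<Omega>" and g: "g \<in> Hcurl \<Omega>" "has_weak_grad \<Omega> p g"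
    and u: "u \<in> H0curl \<Omega>"
  shows "ip \<Omega> (wcurl \<Omega> g) u = 0"
proof (rule ip_H0curl_eq_0[OF b o wcurl_Hcurl(1)[OF g(1)] _ u])
  fix \<psi> :: "real^3 \<Rightarrow> real^3" assume t: "test_fun \<Omega> \<psi>"
  have "ip \<Omega> (wcurl \<Omega> g) \<psi> = ip \<Omega> g (curl \<psi>)"
    using wcurl_Hcurl(2)[OF g(1)] t unfolding has_weak_curl_def by simp
  also have "\<dots> = ip \<Omega> p (\<lambda>x. - (\<Sum>j\<in>UNIV. pd (curl \<psi>) j x $ j))"
    using g(2) test_fun_curl[OF t] unfolding has_weak_grad_def by simp
  also have "\<dots> = 0"
    using div_curl_eq_0 t unfolding test_fun_def ip_def by simp
  finally show "ip \<Omega> (wcurl \<Omega> g) \<psi> = 0" .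
qed

lemma fn_subspace_scaleR_add:
  assumes V: "fn_subspace V" and "u \<in> V" "v \<in> V"
  shows "(\<lambda>x. c *\<^sub>R (u x + v x)) \<in> V"
proof -
  have "(\<lambda>x. u x + v x) \<in> V" using V assms unfolding fn_subspace_def by blast
  moreover have "\<forall>w\<in>V. (\<lambda>x. c *\<^sub>R w x) \<in> V" using V unfolding fn_subspace_def by blast
  ultimately show ?thesis by force
qed

lemma ip_proj_wcurl_sym:
  assumes b: "bounded \<Omega>" and o: "open \<Omega>" and W: "W \<subseteq> H0curl \<Omega>" and u: "u \<in> W" and v: "v \<in> W"
    and \<omega>: "is_L2_proj \<Omega> W (wcurl \<Omega> u) \<omega>" and \<eta>: "is_L2_proj \<Omega> W (wcurl \<Omega> v) \<eta>"
  shows "ip \<Omega> v \<omega> = ip \<Omega> u \<eta>"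
proof -
  have "ip \<Omega> v \<omega> = ip \<Omega> (wcurl \<Omega> u) v"
    using \<omega> v unfolding is_L2_proj_def by (metis ip_commute)
  also have "\<dots> = ip \<Omega> u (wcurl \<Omega> v)"
    using W u v by (intro ip_wcurl_sym[OF b o] H0curl_Hcurl) auto
  also have "\<dots> = ip \<Omega> u \<eta>"
    using \<eta> u unfolding is_L2_proj_def by (metis ip_commute)
  finally show ?thesis .
qed

lemma ip_wgrad_proj_wcurl:
  assumes b: "bounded \<Omega>" and o: "open \<Omega>" and W: "W \<subseteq> H0curl \<Omega>" and q: "q \<in> H1 \<Omega>"
    and g: "g \<in> W" "has_weak_grad \<Omega> q g" and u: "u \<in> W" and \<omega>: "is_L2_proj \<Omega> W (wcurl \<Omega> u) \<omega>"
  shows "ip \<Omega> (wgrad \<Omega> q) \<omega> = 0"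
proof -
  have "ip \<Omega> (wgrad \<Omega> q) \<omega> = ip \<Omega> g \<omega>"
    using W g \<omega> unfolding is_L2_proj_def by (intro ip_wgrad_H0curl[OF b o q] H0curl_L2) auto
  also have "\<dots> = ip \<Omega> (wcurl \<Omega> u) g"
    using \<omega> g unfolding is_L2_proj_def by (metis ip_commute)
  also have "\<dots> = ip \<Omega> (wcurl \<Omega> g) u"
    using W u g by (subst ip_wcurl_sym[OF b o]) (auto intro: H0curl_Hcurl simp: ip_commute)
  also have "\<dots> = 0"
    using W u g by (intro ip_wcurl_weak_grad_H0curl[OF b o] H0curl_Hcurl) auto
  finally show ?thesis .
qed

lemma ip_diff_add_cancel:
  fixes a b c d :: "real^3 \<Rightarrow> 'b::euclidean_space"
  assumes "L2 \<Omega> a" "L2 \<Omega> b" "L2 \<Omega> c" "L2 \<Omega> d" and cross: "ip \<Omega> a d = ip \<Omega> b c"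
  shows "ip \<Omega> (\<lambda>x. a x - b x) (\<lambda>x. c x + d x) = ip \<Omega> a c - ip \<Omega> b d"
  using ip_diff_left[OF assms(1,2) L2_add[OF assms(3,4)]] ip_add_right[OF assms(3,4)] assms cross
  by simp

theorem mainTheorem3:
  fixes \<Omega> :: "(real^3) set" and \<T> :: "(real^3) set set" and kg kc :: nat
    and Vh :: "(real^3 \<Rightarrow> real) set" and Wh :: "(real^3 \<Rightarrow> real^3) set"
    and dt :: real and Re :: ereal
    and u0 u1 \<omega>0 \<omega>1 :: "real^3 \<Rightarrow> real^3" and p :: "real^3 \<Rightarrow> real"
  assumes dom: "polyhedral_domain \<Omega>" and contr: "contractible \<Omega>"
    and mesh: "is_mesh \<Omega> \<T>"
    and Vh: "FE_grad_space \<Omega> \<T> kg Vh" and Wh: "FE_curl_space \<Omega> \<T> kc Wh"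
    and grad_incl: "\<forall>q\<in>Vh. \<exists>g\<in>Wh. has_weak_grad \<Omega> q g"
    and dt: "dt > 0" and Re: "Re > 0"
    and u0: "u0 \<in> Wh" and u1: "u1 \<in> Wh" and p: "p \<in> Vh"
    and \<omega>0: "is_L2_proj \<Omega> Wh (wcurl \<Omega> u0) \<omega>0"
    and \<omega>1: "is_L2_proj \<Omega> Wh (wcurl \<Omega> u1) \<omega>1"
    and eq: "\<forall>v\<in>Wh.
        ip \<Omega> (\<lambda>x. (1 / dt) *\<^sub>R (u1 x - u0 x)) v
      - ip \<Omega> (\<lambda>x. cross3 ((1/2) *\<^sub>R (u1 x + u0 x)) ((1/2) *\<^sub>R (\<omega>1 x + \<omega>0 x))) v
      + real_of_ereal (inverse Re) * ip \<Omega> (wcurl \<Omega> (\<lambda>x. (1/2) *\<^sub>R (u1 x + u0 x))) (wcurl \<Omega> v)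
      + ip \<Omega> (wgrad \<Omega> p) v = 0"
    and div: "\<forall>q\<in>Vh. ip \<Omega> (\<lambda>x. (1/2) *\<^sub>R (u1 x + u0 x)) (wgrad \<Omega> q) = 0"
  shows "(1 / dt) * (ip \<Omega> u1 \<omega>1 - ip \<Omega> u0 \<omega>0)
           = - 2 * real_of_ereal (inverse Re)
               * ip \<Omega> (wcurl \<Omega> (\<lambda>x. (1/2) *\<^sub>R (u1 x + u0 x)))
                      (wcurl \<Omega> (\<lambda>x. (1/2) *\<^sub>R (\<omega>1 x + \<omega>0 x)))
       \<and> (Re = \<infinity> \<longrightarrow> ip \<Omega> u1 \<omega>1 = ip \<Omega> u0 \<omega>0)"
proof -
  have \<Omega>: "bounded \<Omega>" "open \<Omega>" using dom unfolding polyhedral_domain_def by auto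
  have W: "fn_subspace Wh" "Wh \<subseteq> H0curl \<Omega>" using Wh unfolding FE_curl_space_def by auto
  have L2: "L2 \<Omega> u0" "L2 \<Omega> u1" "L2 \<Omega> \<omega>0" "L2 \<Omega> \<omega>1"
    using W(2) u0 u1 \<omega>0 \<omega>1 unfolding is_L2_proj_def by (auto intro: H0curl_L2)
  define \<omega> where "\<omega> = (\<lambda>x. (1/2::real) *\<^sub>R (\<omega>1 x + \<omega>0 x))"
  have "\<omega> \<in> Wh"
    using \<omega>0 \<omega>1 fn_subspace_scaleR_add[OF W(1)] unfolding \<omega>_def is_L2_proj_def by blast
  have time: "ip \<Omega> (\<lambda>x. (1 / dt) *\<^sub>R (u1 x - u0 x)) \<omega> = (1 / dt) * (1/2) * (ip \<Omega> u1 \<omega>1 - ip \<Omega> u0 \<omega>0)"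
    using ip_diff_add_cancel[OF L2(2,1,4,3) ip_proj_wcurl_sym[OF \<Omega> W(2) u0 u1 \<omega>0 \<omega>1]]
    unfolding \<omega>_def ip_scaleR_left ip_scaleR_right by simp
  have convection: "ip \<Omega> (\<lambda>x. cross3 ((1/2) *\<^sub>R (u1 x + u0 x)) ((1/2) *\<^sub>R (\<omega>1 x + \<omega>0 x))) \<omega> = 0"
    unfolding ip_def \<omega>_def by (simp only: dot_cross_self(3)) simp
  obtain g where g: "g \<in> Wh" "has_weak_grad \<Omega> p g" using grad_incl p by blast
  have "p \<in> H1 \<Omega>" using Vh p unfolding FE_grad_space_def H01_def by auto
  then have pressure: "ip \<Omega> (wgrad \<Omega> p) \<omega> = 0"
    using ip_add_right[OF L2(4,3) wgrad_H1(1)] ip_wgrad_proj_wcurl[OF \<Omega> W(2) _ g] u0 u1 \<omega>0 \<omega>1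
    unfolding \<omega>_def ip_scaleR_right by simp
  have "(1 / dt) * (1/2) * (ip \<Omega> u1 \<omega>1 - ip \<Omega> u0 \<omega>0)
      + real_of_ereal (inverse Re) * ip \<Omega> (wcurl \<Omega> (\<lambda>x. (1/2) *\<^sub>R (u1 x + u0 x))) (wcurl \<Omega> \<omega>) = 0"
    using eq[rule_format, OF \<open>\<omega> \<in> Wh\<close>] unfolding time convection pressure by linarith
  then have helicity: "(1 / dt) * (ip \<Omega> u1 \<omega>1 - ip \<Omega> u0 \<omega>0) = - 2 * real_of_ereal (inverse Re)
      * ip \<Omega> (wcurl \<Omega> (\<lambda>x. (1/2) *\<^sub>R (u1 x + u0 x))) (wcurl \<Omega> \<omega>)"
    by (simp add: algebra_simps)
  moreover have "ip \<Omega> u1 \<omega>1 = ip \<Omega> u0 \<omega>0" if "Re = \<infinity>"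
    using helicity dt that by simp
  ultimately show ?thesis unfolding \<omega>_def by blast
qed

end
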